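(* Let $\alpha>-1$ and let $n\ge 0$ be an integer. The matrix $\big((\alpha+1)_{j+k}\big)_{j,k=0}^{n}$ is invertible and \[ \big((\alpha+1)_{j+k}\big)_{j,k=0}^{n}{}^{-1}=\left(\sum_{\ell=0}^{n}\frac{(\alpha+1)_{\ell}\,(-\ell)_{j}\,(-\ell)_{k}}{\ell!\,(\alpha+1)_{j}\,(\alpha+1)_{k}\,j!\,k!}\right)_{j,k=0}^{n}. \]
   Context: For a complex number $z$ and integer $m\ge0$, $(z)_m=z(z+1)\cdots(z+m-1)$ denotes the shifted factorial, with $(z)_0=1$ (so $(-\ell)_j=0$ when $j>\ell$). *)

theory Defs
  imports "Jordan_Normal_Form.Matrix"
begin

definition hankel_poch :: "real \<Rightarrow> nat \<Rightarrow> real mat" where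
  "hankel_poch \<alpha> n = mat (Suc n) (Suc n) (\<lambda>(j,k). pochhammer (\<alpha> + 1) (j + k))"

definition hankel_poch_inv :: "real \<Rightarrow> nat \<Rightarrow> real mat" where
  "hankel_poch_inv \<alpha> n = mat (Suc n) (Suc n) (\<lambda>(j,k).
     \<Sum>l = 0..n. pochhammer (\<alpha> + 1) l * pochhammer (- real l) j * pochhammer (- real l) k
       / (fact l * pochhammer (\<alpha> + 1) j * pochhammer (\<alpha> + 1) k * fact j * fact k))"

end

theory Submission
  imports Defs "Jordan_Normal_Form.Determinant" "HOL-Computational_Algebra.Formal_Power_Series"
begin

(* Write P j = (a)_j and Q l j = (-l)_j.  The claimed inverse of the Hankel matrix
   H = (P (i+j))_{i,j} factors as B = L^T D L with L_{l,j} = Q l j / (P j * j!) and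
   D = diag (P l / l!).  Multiplying out, (H B)_{i,k} is computed in two summations:
   (1) the sum over j is a terminating Chu-Vandermonde sum:
         sum_j P (i+j) Q l j / (P j j!) = P i * Q i l / P l;
   (2) the remaining sum over l is an orthogonality relation between the Q's,
         sum_l Q i l * Q l k / l! = k! [i = k],
       which is binomial inversion once Q l j is rewritten as (-1)^j j! (l choose j).
   Both identities hold over any field of characteristic 0 as long as a is not a
   non-positive integer; the theorem instantiates a = alpha + 1 > 0.  Since H is
   square, the right inverse B is also a left inverse, so H is invertible. *)

lemma pochhammer_neg_of_nat:
  "pochhammer (- of_nat l :: 'a::field_char_0) j = (-1)^j * fact j * of_nat (l choose j)"
proof -
  have "fact j * of_nat (l choose j) = (-1)^j * pochhammer (- of_nat l :: 'a) j"
    by (simp add: binomial_gbinomial gbinomial_pochhammer)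
  moreover have "(-1::'a)^j * (-1)^j = 1"
    by (simp flip: power_add)
  ultimately show ?thesis
    by (metis mult.assoc mult_1)
qed

text \<open>Binomial inversion: the Pascal matrix (i choose l) and the signed Pascal matrix
  ((-1)^(l+k) (l choose k)) are mutually inverse; truncation at any n \<ge> i is harmless.\<close>
lemma alternating_binomial_inversion:
  assumes "i \<le> n"
  shows "(\<Sum>l=0..n. (-1)^l * of_nat (i choose l) * of_nat (l choose k))
         = (if i = k then (-1)^k else (0::'a::comm_ring_1))"
proof (cases "k \<le> i")
  case False
  then have "(-1)^l * of_nat (i choose l) * of_nat (l choose k) = (0::'a)" for l
    by (cases "l \<le> i") (simp_all add: binomial_eq_0)
  then show ?thesis
    using False by simp
next
  case True
  have "(\<Sum>l=0..n. (-1)^l * of_nat (i choose l) * of_nat (l choose k))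
      = (\<Sum>l=k..i. (-1)^l * of_nat (i choose l) * of_nat (l choose k) :: 'a)"
    using assms True by (intro sum.mono_neutral_right) (auto simp: binomial_eq_0)
  also have "\<dots> = (\<Sum>m=0..i-k. (-1)^(m+k) * of_nat (i choose (m+k)) * of_nat ((m+k) choose k))"
    using True by (intro sum.reindex_bij_witness[where j="\<lambda>l. l - k" and i="\<lambda>m. m + k"]) auto
  also have "\<dots> = (-1)^k * of_nat (i choose k) * (\<Sum>m=0..i-k. (-1)^m * of_nat ((i-k) choose m))"
    unfolding sum_distrib_left
  proof (intro sum.cong refl)
    fix m assume "m \<in> {0..i-k}"
    then have "(i choose (m+k)) * ((m+k) choose k) = (i choose k) * ((i-k) choose m)"
      using choose_mult[of k "m+k" i] True by auto
    then have "of_nat (i choose (m+k)) * of_nat ((m+k) choose k)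
             = (of_nat (i choose k) * of_nat ((i-k) choose m) :: 'a)"
      by (metis of_nat_mult)
    then show "(-1)^(m+k) * of_nat (i choose (m+k)) * of_nat ((m+k) choose k)
        = (-1)^k * of_nat (i choose k) * ((-1)^m * of_nat ((i-k) choose m) :: 'a)"
      by (simp add: power_add algebra_simps)
  qed
  also have "(\<Sum>m=0..i-k. (-1)^m * of_nat ((i-k) choose m)) = (if i = k then 1 else (0::'a))"
    using choose_alternating_sum[of "i-k", where 'a='a] True
    by (auto simp: atLeast0AtMost mult.commute)
  finally show ?thesis
    by simp
qed

lemma pochhammer_neg_orthogonality:
  assumes "i \<le> n"
  shows "(\<Sum>l=0..n. pochhammer (- of_nat i) l * pochhammer (- of_nat l) k / fact l)
         = (if i = k then fact k else (0::'a::field_char_0))"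
proof -
  have "(\<Sum>l=0..n. pochhammer (- of_nat i) l * pochhammer (- of_nat l) k / fact l)
      = (-1)^k * fact k * (\<Sum>l=0..n. (-1)^l * of_nat (i choose l) * of_nat (l choose k) :: 'a)"
    unfolding sum_distrib_left pochhammer_neg_of_nat
    by (intro sum.cong refl) (simp add: field_simps)
  also have "\<dots> = (if i = k then fact k else 0)"
    by (simp add: alternating_binomial_inversion[OF assms] flip: power_add)
  finally show ?thesis .
qed

text \<open>Step (1): a shifted Chu-Vandermonde sum.  The terms with j > l vanish, so the
  range of summation may be any n \<ge> l.\<close>
lemma pochhammer_shifted_vandermonde:
  fixes a :: "'a::field_char_0"
  assumes a: "\<And>m. a \<noteq> - of_nat m" and "l \<le> n"
  shows "(\<Sum>j=0..n. pochhammer a (i+j) * pochhammer (- of_nat l) j / (pochhammer a j * fact j))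
       = pochhammer a i * pochhammer (- of_nat i) l / pochhammer a l"
proof -
  have "(\<Sum>j=0..n. pochhammer a (i+j) * pochhammer (- of_nat l) j / (pochhammer a j * fact j))
      = (\<Sum>j=0..l. pochhammer a (i+j) * pochhammer (- of_nat l) j / (pochhammer a j * fact j))"
    using \<open>l \<le> n\<close> by (intro sum.mono_neutral_right) (auto simp: pochhammer_of_nat_eq_0_lemma)
  also have "\<dots> = pochhammer a i * (\<Sum>j=0..l. pochhammer (a + of_nat i) j * pochhammer (- of_nat l) j
      / (of_nat (fact j) * pochhammer a j))"
    unfolding sum_distrib_left pochhammer_product'
    by (intro sum.cong refl) (simp add: mult_ac)
  also have "\<dots> = pochhammer a i * (pochhammer (a - (a + of_nat i)) l / pochhammer a l)"
    using a by (subst Vandermonde_pochhammer) auto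
  finally show ?thesis
    by simp
qed

lemma hankel_pochhammer_inverse_entry:
  fixes a :: "'a::field_char_0"
  assumes a: "\<And>m. a \<noteq> - of_nat m" and i: "i \<le> n"
  shows "(\<Sum>j=0..n. pochhammer a (i+j) * (\<Sum>l=0..n. pochhammer a l * pochhammer (- of_nat l) j
      * pochhammer (- of_nat l) k / (fact l * pochhammer a j * pochhammer a k * fact j * fact k)))
    = (if i = k then 1 else 0)"
proof -
  let ?P = "pochhammer a" and ?Q = "\<lambda>l j. pochhammer (- of_nat l :: 'a) j"
  have P_nonzero: "?P j \<noteq> 0" for j
    using a by (auto simp: pochhammer_eq_0_iff)
  have "(\<Sum>j=0..n. ?P (i+j) * (\<Sum>l=0..n. ?P l * ?Q l j * ?Q l k / (fact l * ?P j * ?P k * fact j * fact k)))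
     = (\<Sum>l=0..n. ?P l * ?Q l k / (fact l * ?P k * fact k) *
          (\<Sum>j=0..n. ?P (i+j) * ?Q l j / (?P j * fact j)))"
    unfolding sum_distrib_left
    by (subst sum.swap) (intro sum.cong refl, simp add: field_simps)
  also have "\<dots> = (\<Sum>l=0..n. ?P l * ?Q l k / (fact l * ?P k * fact k) * (?P i * ?Q i l / ?P l))"
    by (intro sum.cong refl) (simp add: pochhammer_shifted_vandermonde[OF a])
  also have "\<dots> = ?P i / (?P k * fact k) * (\<Sum>l=0..n. ?Q i l * ?Q l k / fact l)"
    unfolding sum_distrib_left
    by (intro sum.cong refl) (simp add: P_nonzero field_simps)
  also have "\<dots> = (if i = k then 1 else 0)"
    by (simp add: pochhammer_neg_orthogonality[OF i] P_nonzero)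
  finally show ?thesis .
qed

theorem mainTheorem2:
  fixes \<alpha> :: real and n :: nat
  assumes "\<alpha> > -1"
  shows "invertible_mat (hankel_poch \<alpha> n)
    \<and> hankel_poch \<alpha> n * hankel_poch_inv \<alpha> n = 1\<^sub>m (Suc n)
    \<and> hankel_poch_inv \<alpha> n * hankel_poch \<alpha> n = 1\<^sub>m (Suc n)"
proof -
  have a: "\<alpha> + 1 \<noteq> - real m" for m
    using assms by linarith
  have H: "hankel_poch \<alpha> n \<in> carrier_mat (Suc n) (Suc n)"
    and B: "hankel_poch_inv \<alpha> n \<in> carrier_mat (Suc n) (Suc n)"
    by (simp_all add: hankel_poch_def hankel_poch_inv_def)
  have HB: "hankel_poch \<alpha> n * hankel_poch_inv \<alpha> n = 1\<^sub>m (Suc n)"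
  proof (rule eq_matI)
    fix i k assume "i < dim_row (1\<^sub>m (Suc n) :: real mat)" "k < dim_col (1\<^sub>m (Suc n) :: real mat)"
    then have "i \<le> n" "k \<le> n" "i < Suc n" "k < Suc n" by auto
    then show "(hankel_poch \<alpha> n * hankel_poch_inv \<alpha> n) $$ (i, k) = 1\<^sub>m (Suc n) $$ (i, k)"
      using hankel_pochhammer_inverse_entry[OF a \<open>i \<le> n\<close>, of k]
      by (simp add: hankel_poch_def hankel_poch_inv_def scalar_prod_def atLeastLessThanSuc_atLeastAtMost)
  qed (use H B in auto)
  have BH: "hankel_poch_inv \<alpha> n * hankel_poch \<alpha> n = 1\<^sub>m (Suc n)"
    by (rule mat_mult_left_right_inverse[OF H B HB])
  have "invertible_mat (hankel_poch \<alpha> n)"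
    unfolding invertible_mat_def inverts_mat_def using H B HB BH by auto
  with HB BH show ?thesis
    by blast
qed

end
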